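(* Let $X,X_1,X_2,X_3,X_{12},X_{13},X_{23},X_{123}$ be eight points in the plane, forming a combinatorial cube. For $\{i,j,k\}=\{1,2,3\}$, the pair of opposite faces $XX_iX_{ij}X_j$ and $X_kX_{ik}X_{ijk}X_{jk}$ has four pairs of corresponding edges $(XX_i,\,X_kX_{ik})$, $(X_iX_{ij},\,X_{ik}X_{ijk})$, $(X_jX_{ij},\,X_{jk}X_{ijk})$, $(XX_j,\,X_kX_{jk})$, whose (lines') intersection points are four points. If, for some pair of opposite faces, these four intersection points of corresponding edges are collinear, then the same is true for every other pair of opposite faces.
   Context: Subscripts are unordered, so $X_{ij}=X_{ji}$ and $X_{ijk}=X_{123}$. The vertices of the combinatorial cube are indexed by subsets of $\{1,2,3\}$; edges join vertices whose index sets differ by one element, and faces are the quadrilaterals $XX_iX_{ij}X_j$ and $X_kX_{ik}X_{ijk}X_{jk}$. An edge is identified with the line through its two endpoints. The points are assumed to be in general position so that all the lines and intersection points involved are well defined. *)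

theory Defs
  imports "HOL-Analysis.Analysis"
begin

type_synonym point = "real ^ 2"

text \<open>Vertices of the combinatorial cube are indexed by subsets of {1,2,3}.
  The line of an edge is the affine hull of its two endpoints; the intersection
  point of two lines is the (unique, by general position) common point.\<close>

definition meet :: "point \<Rightarrow> point \<Rightarrow> point \<Rightarrow> point \<Rightarrow> point" where
  "meet a b c d = (THE x. x \<in> affine hull {a, b} \<inter> affine hull {c, d})"

definition cube_general_position :: "(nat set \<Rightarrow> point) \<Rightarrow> bool" where
  "cube_general_position P \<longleftrightarrow>
     (\<forall>A m. A \<subseteq> {1,2,3} \<and> m \<in> {1,2,3} \<and> m \<notin> A \<longrightarrow> P A \<noteq> P (insert m A)) \<and>
     (\<forall>A m k. A \<subseteq> {1,2,3} \<and> m \<in> {1,2,3} \<and> k \<in> {1,2,3} \<and> m \<notin> A \<and> k \<notin> A \<and> m \<noteq> k \<longrightarrow>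
        (\<exists>!x. x \<in> affine hull {P A, P (insert m A)} \<inter>
                affine hull {P (insert k A), P (insert k (insert m A))}))"

definition opp_faces_collinear :: "(nat set \<Rightarrow> point) \<Rightarrow> nat \<Rightarrow> nat \<Rightarrow> nat \<Rightarrow> bool" where
  "opp_faces_collinear P i j k \<longleftrightarrow>
     collinear {meet (P {}) (P {i}) (P {k}) (P {i,k}),
                meet (P {i}) (P {i,j}) (P {i,k}) (P {i,j,k}),
                meet (P {j}) (P {i,j}) (P {j,k}) (P {i,j,k}),
                meet (P {}) (P {j}) (P {k}) (P {j,k})}"

end

theory Submission
  imports Defs
begin

text \<open>Let \<open>G\<close> be a nonconstant affine functional vanishing on the line through the four
  intersection points for the faces \<open>X X\<^sub>i X\<^sub>i\<^sub>j X\<^sub>j\<close> and \<open>X\<^sub>k X\<^sub>i\<^sub>k X\<^sub>i\<^sub>j\<^sub>k X\<^sub>j\<^sub>k\<close>.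
  Affine functionals given on two crossing lines and agreeing at the crossing point glue to
  one affine functional of the plane. This yields \<open>F\<^sub>0\<close>, which is \<open>0\<close> on the line
  \<open>X X\<^sub>j\<close> and agrees with \<open>G\<close> on \<open>X\<^sub>k X\<^sub>j\<^sub>k\<close>, and \<open>F\<^sub>1\<close>, which is \<open>0\<close> on
  \<open>X\<^sub>i X\<^sub>i\<^sub>j\<close> and agrees with \<open>G\<close> on \<open>X\<^sub>i\<^sub>k X\<^sub>i\<^sub>j\<^sub>k\<close>. Comparing both with the functionals glued
  in the same way along the remaining two edge pairs shows that \<open>F\<^sub>0 - F\<^sub>1\<close> vanishes at
  the four intersection points for the faces \<open>X X\<^sub>j X\<^sub>j\<^sub>k X\<^sub>k\<close> and \<open>X\<^sub>i X\<^sub>i\<^sub>j X\<^sub>i\<^sub>j\<^sub>k X\<^sub>i\<^sub>k\<close>,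
  so they are collinear unless \<open>F\<^sub>0 = F\<^sub>1\<close>. In that case \<open>F\<^sub>0\<close> vanishes on the crossing
  lines \<open>X X\<^sub>j\<close> and \<open>X\<^sub>i X\<^sub>i\<^sub>j\<close>, hence everywhere, and then \<open>G\<close> vanishes on the crossing
  lines \<open>X\<^sub>k X\<^sub>j\<^sub>k\<close> and \<open>X\<^sub>i\<^sub>k X\<^sub>i\<^sub>j\<^sub>k\<close>, which is absurd. The rotation \<open>(i, j, k) \<mapsto> (j, k, i)\<close>
  together with the symmetry in \<open>i\<close> and \<open>j\<close> reaches every pair of opposite faces.\<close>

definition det2 :: "real^2 \<Rightarrow> real^2 \<Rightarrow> real" where
  "det2 u v = u$1 * v$2 - u$2 * v$1"

lemma inner_vec2: "(x::real^2) \<bullet> y = x$1 * y$1 + x$2 * y$2"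
  by (simp add: inner_vec_def sum_2)

lemma vec2_eq_iff: "(x::real^2) = y \<longleftrightarrow> x$1 = y$1 \<and> x$2 = y$2"
  by (simp add: vec_eq_iff forall_2)

lemma det2_eq_0_imp_parallel:
  assumes "det2 u v = 0" "v \<noteq> 0"
  shows "\<exists>\<mu>. u = \<mu> *\<^sub>R v"
proof
  have "v \<bullet> v \<noteq> 0" using assms(2) by simp
  then show "u = ((u \<bullet> v) / (v \<bullet> v)) *\<^sub>R v"
    using assms(1) by (simp add: vec2_eq_iff inner_vec2 det2_def field_simps)
qed

lemma det2_orthogonal_eq_0:
  assumes "det2 u v \<noteq> 0" "w \<bullet> u = 0" "w \<bullet> v = 0"
  shows "w = 0"
proof -
  have "w$1 * det2 u v = v$2 * (w \<bullet> u) - u$2 * (w \<bullet> v)"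
       "w$2 * det2 u v = u$1 * (w \<bullet> v) - v$1 * (w \<bullet> u)"
    by (simp_all add: det2_def inner_vec2 algebra_simps)
  then show ?thesis
    using assms by (simp add: vec2_eq_iff)
qed

lemma det2_inner_solvable:
  assumes "det2 u v \<noteq> 0"
  obtains w where "w \<bullet> u = \<alpha>" "w \<bullet> v = \<beta>"
proof
  let ?w = "vector [\<alpha> * v$2 - \<beta> * u$2, \<beta> * u$1 - \<alpha> * v$1] :: real^2"
  have "?w \<bullet> u = \<alpha> * det2 u v" "?w \<bullet> v = \<beta> * det2 u v"
    by (simp_all add: inner_vec2 det2_def algebra_simps)
  then show "(?w /\<^sub>R det2 u v) \<bullet> u = \<alpha>" "(?w /\<^sub>R det2 u v) \<bullet> v = \<beta>"
    using assms by simp_all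
qed

definition lines_cross :: "point \<Rightarrow> point \<Rightarrow> point \<Rightarrow> point \<Rightarrow> bool" where
  "lines_cross a b c d \<longleftrightarrow>
     a \<noteq> b \<and> c \<noteq> d \<and> (\<exists>!x. x \<in> affine hull {a, b} \<inter> affine hull {c, d})"

lemma lines_cross_meet:
  assumes "lines_cross a b c d"
  shows "meet a b c d \<in> affine hull {a, b}" "meet a b c d \<in> affine hull {c, d}"
  using theI'[of "\<lambda>x. x \<in> affine hull {a, b} \<inter> affine hull {c, d}"] assms
  by (auto simp: lines_cross_def meet_def)

lemma lines_cross_det2:
  assumes "lines_cross a b c d"
  shows "det2 (b - a) (d - c) \<noteq> 0"
proof
  assume "det2 (b - a) (d - c) = 0"
  moreover have "a \<noteq> b" "c \<noteq> d" and unique: "\<exists>!x. x \<in> affine hull {a, b} \<inter> affine hull {c, d}"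
    using assms by (auto simp: lines_cross_def)
  ultimately obtain \<mu> where \<mu>: "b - a = \<mu> *\<^sub>R (d - c)"
    using det2_eq_0_imp_parallel by (metis eq_iff_diff_eq_0)
  obtain x where x: "x \<in> affine hull {a, b} \<inter> affine hull {c, d}"
    using unique by blast
  then obtain s r where s: "x = a + s *\<^sub>R (b - a)" and r: "x = c + r *\<^sub>R (d - c)"
    unfolding affine_hull_2_alt by blast
  \<comment> \<open>parallel lines sharing a point also share its translate by \<open>b - a\<close>\<close>
  have "x + (b - a) = a + (s + 1) *\<^sub>R (b - a)"
    using s by (simp add: algebra_simps)
  moreover have "x + (b - a) = c + (r + \<mu>) *\<^sub>R (d - c)"
    using r \<mu> by (simp add: scaleR_add_left add.assoc)
  ultimately have "x + (b - a) \<in> affine hull {a, b} \<inter> affine hull {c, d}"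
    unfolding affine_hull_2_alt by (metis IntI rangeI)
  then have "x + (b - a) = x"
    using unique x by blast
  with \<open>a \<noteq> b\<close> show False
    by simp
qed

definition affine_functional :: "('a::real_inner \<Rightarrow> real) \<Rightarrow> bool" where
  "affine_functional f \<longleftrightarrow> (\<exists>w c. \<forall>x. f x = w \<bullet> x + c)"

lemma affine_functional_const: "affine_functional (\<lambda>_. c)"
  unfolding affine_functional_def by (metis inner_zero_left add_0)

lemma affine_functional_diff:
  assumes "affine_functional f" "affine_functional g"
  shows "affine_functional (\<lambda>x. f x - g x)"
proof -
  obtain w c w' c' where "\<And>x. f x = w \<bullet> x + c" "\<And>x. g x = w' \<bullet> x + c'"
    using assms by (meson affine_functional_def)
  then have "\<forall>x. f x - g x = (w - w') \<bullet> x + (c - c')"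
    by (simp add: inner_diff_left)
  then show ?thesis
    unfolding affine_functional_def by blast
qed

lemma affine_functional_const_on_affine_hull:
  assumes "affine_functional f" "\<And>y. y \<in> S \<Longrightarrow> f y = c" "x \<in> affine hull S"
  shows "f x = c"
proof -
  obtain w c0 where f: "\<And>x. f x = w \<bullet> x + c0"
    using assms(1) by (meson affine_functional_def)
  have "S \<subseteq> {y. w \<bullet> y = c - c0}"
    using assms(2) f by force
  then have "affine hull S \<subseteq> {y. w \<bullet> y = c - c0}"
    by (simp add: hull_minimal affine_hyperplane)
  then show ?thesis
    using assms(3) f by force
qed

lemma affine_functionals_eq_on_affine_hull:
  assumes "affine_functional f" "affine_functional g" "\<And>y. y \<in> S \<Longrightarrow> f y = g y"
    and "x \<in> affine hull S"
  shows "f x = g x"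
  using affine_functional_const_on_affine_hull[OF affine_functional_diff[OF assms(1,2)], of S 0]
    assms(3,4) by simp

lemma affine_functional_vanishing_on_crossing_lines:
  assumes "lines_cross a b c d" "affine_functional f"
    and "f a = 0" "f b = 0" "f c = 0" "f d = 0"
  shows "f x = 0"
proof -
  obtain w c0 where f: "\<And>x. f x = w \<bullet> x + c0"
    using assms(2) by (meson affine_functional_def)
  have "w \<bullet> (b - a) = 0" "w \<bullet> (d - c) = 0"
    using assms(3-6) by (simp_all add: f inner_diff_right)
  then have "w = 0"
    using det2_orthogonal_eq_0 lines_cross_det2[OF assms(1)] by blast
  then show ?thesis
    using assms(3) by (simp add: f)
qed

lemma affine_functional_glue:
  assumes "lines_cross a b c d" "affine_functional g" "affine_functional h"
    and "g (meet a b c d) = h (meet a b c d)"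
  obtains f where "affine_functional f" "f a = g a" "f b = g b" "f c = h c" "f d = h d"
proof -
  let ?m = "meet a b c d"
  obtain w where w: "w \<bullet> (b - a) = g b - g a" "w \<bullet> (d - c) = h d - h c"
    using det2_inner_solvable lines_cross_det2[OF assms(1)] by metis
  define f where "f x = w \<bullet> x + (g ?m - w \<bullet> ?m)" for x
  have f: "affine_functional f"
    unfolding affine_functional_def f_def by blast
  \<comment> \<open>\<open>f - g\<close> is constant along the line \<open>ab\<close> and vanishes at \<open>?m\<close>; likewise \<open>f - h\<close> along \<open>cd\<close>\<close>
  have "f ?m - g ?m = f a - g a"
    by (rule affine_functional_const_on_affine_hull[OF affine_functional_diff[OF f assms(2)]
          _ lines_cross_meet(1)[OF assms(1)]])
      (use w(1) in \<open>auto simp: f_def inner_diff_right\<close>)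
  moreover have "f ?m - h ?m = f c - h c"
    by (rule affine_functional_const_on_affine_hull[OF affine_functional_diff[OF f assms(3)]
          _ lines_cross_meet(2)[OF assms(1)]])
      (use w(2) in \<open>auto simp: f_def inner_diff_right\<close>)
  ultimately show ?thesis
    using that[OF f] w assms(4) by (simp add: f_def inner_diff_right)
qed

lemma affine_functionals_eq_at_meet:
  assumes "lines_cross a b c d"
    and "affine_functional f" "affine_functional g" "affine_functional h"
    and "f a = h a" "f b = h b" "g c = h c" "g d = h d"
  shows "f (meet a b c d) = g (meet a b c d)"
proof -
  have "f (meet a b c d) = h (meet a b c d)"
    using affine_functionals_eq_on_affine_hull[OF assms(2,4) _ lines_cross_meet(1)[OF assms(1)]]
      assms(5,6) by blast
  moreover have "g (meet a b c d) = h (meet a b c d)"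
    using affine_functionals_eq_on_affine_hull[OF assms(3,4) _ lines_cross_meet(2)[OF assms(1)]]
      assms(7,8) by blast
  ultimately show ?thesis by simp
qed

lemma collinear_iff_subset_hyperplane:
  fixes S :: "'a::euclidean_space set"
  assumes "DIM('a) = 2"
  shows "collinear S \<longleftrightarrow> (\<exists>a b. a \<noteq> 0 \<and> S \<subseteq> {x. a \<bullet> x = b})"
proof
  assume "collinear S"
  then have "aff_dim S < DIM('a)"
    using assms by (simp add: collinear_aff_dim)
  then show "\<exists>a b. a \<noteq> 0 \<and> S \<subseteq> {x. a \<bullet> x = b}"
    by (metis aff_lowdim_subset_hyperplane)
next
  assume "\<exists>a b. a \<noteq> 0 \<and> S \<subseteq> {x. a \<bullet> x = b}"
  then obtain a b where "a \<noteq> 0" "S \<subseteq> {x. a \<bullet> x = b}"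
    by blast
  from \<open>S \<subseteq> _\<close> have "aff_dim S \<le> aff_dim {x. a \<bullet> x = b}"
    by (rule aff_dim_subset)
  then show "collinear S"
    using \<open>a \<noteq> 0\<close> assms by (simp add: collinear_aff_dim)
qed

lemma collinear_imp_affine_functional:
  fixes S :: "'a::euclidean_space set"
  assumes "DIM('a) = 2" "collinear S"
  obtains f p where "affine_functional f" "f p \<noteq> 0" "\<And>x. x \<in> S \<Longrightarrow> f x = 0"
proof -
  obtain a b where "a \<noteq> 0" and S: "S \<subseteq> {x. a \<bullet> x = b}"
    using assms collinear_iff_subset_hyperplane by blast
  have f: "affine_functional (\<lambda>x. a \<bullet> x - b)"
    unfolding affine_functional_def by (metis diff_conv_add_uminus)
  have zero: "a \<bullet> x - b = 0" if "x \<in> S" for x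
    using S that by auto
  have "a \<bullet> 0 - b \<noteq> 0 \<or> a \<bullet> a - b \<noteq> 0"
    using \<open>a \<noteq> 0\<close> by fastforce
  then show ?thesis
    using that[OF f _ zero] by blast
qed

lemma affine_functional_zero_set_collinear:
  fixes S :: "'a::euclidean_space set"
  assumes "DIM('a) = 2" "affine_functional f" "f p \<noteq> 0" "\<And>x. x \<in> S \<Longrightarrow> f x = 0"
  shows "collinear S"
proof -
  obtain w c where f: "\<And>x. f x = w \<bullet> x + c"
    using assms(2) by (meson affine_functional_def)
  show ?thesis
  proof (cases "w = 0")
    case True
    then have "S = {}"
      using assms(3,4) f by force
    then show ?thesis by simp
  next
    case False
    have "S \<subseteq> {x. w \<bullet> x = - c}"
      using assms(4) f by (force simp: eq_neg_iff_add_eq_0)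
    then show ?thesis
      using False assms(1) collinear_iff_subset_hyperplane by blast
  qed
qed

lemma collinear_meets_rotate:
  fixes x xi xj xk xij xik xjk xijk :: point
  assumes cross: "lines_cross x xi xk xik" "lines_cross xi xij xik xijk"
      "lines_cross xj xij xjk xijk" "lines_cross x xj xk xjk"
    and cross': "lines_cross x xj xi xij" "lines_cross xj xjk xij xijk"
      "lines_cross xk xjk xik xijk" "lines_cross x xk xi xik"
    and col: "collinear {meet x xi xk xik, meet xi xij xik xijk,
                         meet xj xij xjk xijk, meet x xj xk xjk}"
  shows "collinear {meet x xj xi xij, meet xj xjk xij xijk,
                    meet xk xjk xik xijk, meet x xk xi xik}"
proof -
  have dim: "DIM(point) = 2" by simp
  have zero: "affine_functional (\<lambda>_. 0 :: real)"
    by (rule affine_functional_const)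
  obtain G q where G: "affine_functional G" "G q \<noteq> 0"
    and G0: "G (meet x xi xk xik) = 0" "G (meet xi xij xik xijk) = 0"
      "G (meet xj xij xjk xijk) = 0" "G (meet x xj xk xjk) = 0"
    using collinear_imp_affine_functional[OF dim col] by (metis insertCI)
  obtain F0 where F0: "affine_functional F0" "F0 x = 0" "F0 xj = 0" "F0 xk = G xk" "F0 xjk = G xjk"
    using affine_functional_glue[OF cross(4) zero G(1)] G0(4) by metis
  obtain F1 where F1: "affine_functional F1" "F1 xi = 0" "F1 xij = 0"
      "F1 xik = G xik" "F1 xijk = G xijk"
    using affine_functional_glue[OF cross(2) zero G(1)] G0(2) by metis
  obtain Fj where Fj: "affine_functional Fj" "Fj xj = 0" "Fj xij = 0"
      "Fj xjk = G xjk" "Fj xijk = G xijk"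
    using affine_functional_glue[OF cross(3) zero G(1)] G0(3) by metis
  obtain Fi where Fi: "affine_functional Fi" "Fi x = 0" "Fi xi = 0" "Fi xk = G xk" "Fi xik = G xik"
    using affine_functional_glue[OF cross(1) zero G(1)] G0(1) by metis
  have "F0 (meet x xj xi xij) = F1 (meet x xj xi xij)"
    by (rule affine_functionals_eq_at_meet[OF cross'(1) F0(1) F1(1) zero]) (simp_all add: F0 F1)
  moreover have "F0 (meet xj xjk xij xijk) = F1 (meet xj xjk xij xijk)"
    by (rule affine_functionals_eq_at_meet[OF cross'(2) F0(1) F1(1) Fj(1)]) (simp_all add: F0 F1 Fj)
  moreover have "F0 (meet xk xjk xik xijk) = F1 (meet xk xjk xik xijk)"
    by (rule affine_functionals_eq_at_meet[OF cross'(3) F0(1) F1(1) G(1)]) (simp_all add: F0 F1)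
  moreover have "F0 (meet x xk xi xik) = F1 (meet x xk xi xik)"
    by (rule affine_functionals_eq_at_meet[OF cross'(4) F0(1) F1(1) Fi(1)]) (simp_all add: F0 F1 Fi)
  ultimately have D0: "F0 p - F1 p = 0"
    if "p \<in> {meet x xj xi xij, meet xj xjk xij xijk, meet xk xjk xik xijk, meet x xk xi xik}" for p
    using that by auto
  show ?thesis
  proof (cases "\<exists>p. F0 p - F1 p \<noteq> 0")
    case True
    then show ?thesis
      using affine_functional_zero_set_collinear[OF dim affine_functional_diff[OF F0(1) F1(1)]] D0
      by blast
  next
    case False
    then have F01: "F0 p = F1 p" for p
      by simp
    have "F0 xi = 0" "F0 xij = 0"
      using F01 F1(2,3) by simp_all
    with F0(2,3) have F0z: "F0 p = 0" for p
      by (rule affine_functional_vanishing_on_crossing_lines[OF cross'(1) F0(1)])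
    have "G xk = 0" "G xjk = 0" "G xik = 0" "G xijk = 0"
      using F0(4,5) F1(4,5) F0z F01 by metis+
    then have "G p = 0" for p
      by (rule affine_functional_vanishing_on_crossing_lines[OF cross'(3) G(1)])
    with G(2) show ?thesis
      by blast
  qed
qed

lemma insert3_eq_123_distinct:
  assumes "{i, j, k} = {1, 2, 3 :: nat}"
  shows "i \<noteq> j" "i \<noteq> k" "j \<noteq> k"
proof -
  have "card {i, j, k} = 3"
    using assms by simp
  then show "i \<noteq> j" "i \<noteq> k" "j \<noteq> k"
    by (auto simp: card_insert_if split: if_splits)
qed

lemma cube_general_position_lines_cross:
  assumes "cube_general_position P" "A \<subseteq> {1, 2, 3}" "m \<in> {1, 2, 3}" "n \<in> {1, 2, 3}"
    and "m \<notin> A" "n \<notin> A" "m \<noteq> n"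
  shows "lines_cross (P A) (P (insert m A)) (P (insert n A)) (P (insert n (insert m A)))"
proof -
  note gp = assms(1)[unfolded cube_general_position_def]
  have edge: "P B \<noteq> P (insert l B)" if "B \<subseteq> {1, 2, 3}" "l \<in> {1, 2, 3}" "l \<notin> B" for B l
    by (rule conjunct1[OF gp, rule_format]) (use that in blast)
  have "P A \<noteq> P (insert m A)"
    using edge assms(2,3,5) .
  moreover have "P (insert n A) \<noteq> P (insert n (insert m A))"
    using edge[of "insert n A" m] assms(2-7) by (simp add: insert_commute)
  moreover have "\<exists>!x. x \<in> affine hull {P A, P (insert m A)} \<inter>
      affine hull {P (insert n A), P (insert n (insert m A))}"
    by (rule conjunct2[OF gp, rule_format]) (use assms in blast)
  ultimately show ?thesis
    unfolding lines_cross_def by blast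
qed

lemma opp_faces_collinear_rotate:
  assumes gp: "cube_general_position P" and ijk: "{i, j, k} = {1, 2, 3}"
    and "opp_faces_collinear P i j k"
  shows "opp_faces_collinear P j k i"
proof -
  have cross: "lines_cross (P A) (P (insert m A)) (P (insert n A)) (P (insert n (insert m A)))"
    if "A \<subseteq> {i, j, k}" "m \<in> {i, j, k}" "n \<in> {i, j, k}" "m \<notin> A" "n \<notin> A" "m \<noteq> n" for A m n
    by (rule cube_general_position_lines_cross[OF gp]) (use that[unfolded ijk] in auto)
  note distinct = insert3_eq_123_distinct[OF ijk]
  have "lines_cross (P {}) (P {i}) (P {k}) (P {i, k})"
    using cross[of "{}" i k] distinct by (simp add: insert_commute)
  moreover have "lines_cross (P {i}) (P {i, j}) (P {i, k}) (P {i, j, k})"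
    using cross[of "{i}" j k] distinct by (simp add: insert_commute)
  moreover have "lines_cross (P {j}) (P {i, j}) (P {j, k}) (P {i, j, k})"
    using cross[of "{j}" i k] distinct by (simp add: insert_commute)
  moreover have "lines_cross (P {}) (P {j}) (P {k}) (P {j, k})"
    using cross[of "{}" j k] distinct by (simp add: insert_commute)
  moreover have "lines_cross (P {}) (P {j}) (P {i}) (P {i, j})"
    using cross[of "{}" j i] distinct by (simp add: insert_commute)
  moreover have "lines_cross (P {j}) (P {j, k}) (P {i, j}) (P {i, j, k})"
    using cross[of "{j}" k i] distinct by (simp add: insert_commute)
  moreover have "lines_cross (P {k}) (P {j, k}) (P {i, k}) (P {i, j, k})"
    using cross[of "{k}" j i] distinct by (simp add: insert_commute)
  moreover have "lines_cross (P {}) (P {k}) (P {i}) (P {i, k})"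
    using cross[of "{}" k i] distinct by (simp add: insert_commute)
  moreover note assms(3)[unfolded opp_faces_collinear_def]
  ultimately have "collinear {meet (P {}) (P {j}) (P {i}) (P {i, j}),
      meet (P {j}) (P {j, k}) (P {i, j}) (P {i, j, k}),
      meet (P {k}) (P {j, k}) (P {i, k}) (P {i, j, k}), meet (P {}) (P {k}) (P {i}) (P {i, k})}"
    by (rule collinear_meets_rotate)
  then show ?thesis
    unfolding opp_faces_collinear_def by (simp add: insert_commute)
qed

lemma opp_faces_collinear_swap: "opp_faces_collinear P j i k \<longleftrightarrow> opp_faces_collinear P i j k"
  unfolding opp_faces_collinear_def by (simp add: insert_commute)

theorem theorem3:
  fixes P :: "nat set \<Rightarrow> real ^ 2"
    and i j k i' j' k' :: nat
  assumes "cube_general_position P"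
    and "{i, j, k} = {1, 2, 3}"
    and "{i', j', k'} = {1, 2, 3}"
    and "opp_faces_collinear P i j k"
  shows "opp_faces_collinear P i' j' k'"
proof -
  have jki: "{j, k, i} = {1, 2, 3}"
    using assms(2) by (simp add: insert_commute)
  have rot: "opp_faces_collinear P j k i"
    using opp_faces_collinear_rotate[OF assms(1,2,4)] .
  have rot2: "opp_faces_collinear P k i j"
    using opp_faces_collinear_rotate[OF assms(1) jki rot] .
  have "i' \<in> {i, j, k}" "j' \<in> {i, j, k}" "k' \<in> {i, j, k}"
    using assms(2,3) by blast+
  with insert3_eq_123_distinct[OF assms(3)]
  have "(i', j', k') \<in> {(i, j, k), (j, i, k), (j, k, i), (k, j, i), (k, i, j), (i, k, j)}"
    by auto
  then show ?thesis
    using assms(4) rot rot2 opp_faces_collinear_swap by auto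
qed

end
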